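(* Let $f$ be analytic on $\mathcal{P}=\{z\in\mathbb{C}^n:|z-x_0|<\rho_0\}$, $x_0\in\mathbb{R}^n$, and real-valued on $\mathcal{P}\cap\mathbb{R}^n$. Let $M(k)=\max_{|\alpha|=k}\sup_{\mathcal{P}}|\partial^\alpha f|$. Assume $\mu_{x_0}:=\|\nabla f(x_0)\|>0$, and let $E_0=f(x_0)$. There is a sufficiently small constant $c(n)>0$ and a constant $C(n)$ such that the following holds. Let $$\rho_1\le c(n)\min(\rho_0,\mu_{x_0}M(2)^{-1}),\qquad r=c(n)\rho_1,\qquad r'=c(n)\rho_1\min(1,\mu_{x_0}).$$ Then for any $(w,E)\in\mathbb{C}^{n-1}\times\mathbb{C}$ with $|w|<r$, $|E-E_0|<r'$, the equation $f(\varphi(\xi,w;x_0))=E$ has a unique solution $\xi=g(w,E)$ with $|\xi|<\rho_1$, and $g$ is analytic in $(w,E)$. Moreover: (a) for all such $(w,E)$, $|g(w,E)|\le2\mu_{x_0}^{-1}(|E-E_0|+C(n)M(2)|w|^2)$; (b) for any $x_0'\in\mathbb{R}^n$ with $\|x_0'-x_0\|<r$ and $f(x_0')=E$ for some $|E-E_0|<r'$, there exists $y\in\mathbb{R}^{n-1}$ with $\|y\|\le\|x_0'-x_0\|$ and $x_0'=\varphi(g(y,E),y;x_0)$.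
   Context: $|\cdot|$ is the sup-norm and $\|\cdot\|$ the Euclidean norm. Normal coordinates: for $x_0$ with $\mu_{x_0}=\|\nabla f(x_0)\|>0$, let $\mathfrak{n}_{x_0}=\mu_{x_0}^{-1}\nabla f(x_0)$, let $\mathfrak{e}_{x_0,1},\dots,\mathfrak{e}_{x_0,n-1}$ be an orthonormal basis of $\{\mathfrak{n}_{x_0}\}^\perp\subset\mathbb{R}^n$, and for $(\xi,y)$ (real or complex) set $\varphi(\xi,y;x_0)=x_0+\xi\mathfrak{n}_{x_0}+\sum_{j=1}^{n-1}y_j\mathfrak{e}_{x_0,j}$. *)

theory Defs
  imports "HOL-Analysis.Analysis"
begin

definition supn :: "('a::real_normed_vector)^'n \<Rightarrow> real" where
  "supn z = Max (range (\<lambda>i. norm (z $ i)))"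

definition cvec :: "real^'n \<Rightarrow> complex^'n" where
  "cvec x = (\<chi> i. complex_of_real (x $ i))"

definition cscale :: "complex \<Rightarrow> complex^'n \<Rightarrow> complex^'n" where
  "cscale a v = (\<chi> i. a * v $ i)"

text \<open>Holomorphy (complex differentiability) on an open set: Frechet derivative exists
  and is complex linear, where J is the multiplication by i on the domain.\<close>
definition cdiff_on :: "('a::real_normed_vector \<Rightarrow> complex) \<Rightarrow> ('a \<Rightarrow> 'a) \<Rightarrow> 'a set \<Rightarrow> bool" where
  "cdiff_on F J S \<longleftrightarrow> open S \<and>
     (\<forall>z\<in>S. \<exists>D. (F has_derivative D) (at z) \<and> (\<forall>h. D (J h) = \<i> * D h))"

definition analytic_vec_on :: "(complex^'n \<Rightarrow> complex) \<Rightarrow> (complex^'n) set \<Rightarrow> bool" where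
  "analytic_vec_on F S = cdiff_on F (cscale \<i>) S"

definition analytic_pair_on :: "(complex^'m \<Rightarrow> complex \<Rightarrow> complex) \<Rightarrow> ((complex^'m) \<times> complex) set \<Rightarrow> bool" where
  "analytic_pair_on G S = cdiff_on (\<lambda>(w,E). G w E) (\<lambda>(w,E). (cscale \<i> w, \<i> * E)) S"

definition cpd :: "'n \<Rightarrow> (complex^'n \<Rightarrow> complex) \<Rightarrow> complex^'n \<Rightarrow> complex" where
  "cpd i F z = deriv (\<lambda>t. F (z + axis i t)) 0"

definition rgrad :: "(complex^'n \<Rightarrow> complex) \<Rightarrow> real^'n \<Rightarrow> real^'n" where
  "rgrad F x = (\<chi> i. deriv (\<lambda>t. Re (F (cvec (x + axis i t)))) 0)"

text \<open>Complex normal coordinates phi(xi, w; x0) given unit normal nv and frame e.\<close>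
definition phic :: "real^'n \<Rightarrow> real^'n \<Rightarrow> ('m \<Rightarrow> real^'n) \<Rightarrow> complex \<Rightarrow> complex^'m \<Rightarrow> complex^'n" where
  "phic x0 nv e xi w = cvec x0 + cscale xi (cvec nv) + (\<Sum>j\<in>UNIV. cscale (w $ j) (cvec (e j)))"

end

theory Submission
  imports Defs "HOL-Complex_Analysis.Cauchy_Integral_Formula"
begin

text \<open>For fixed \<open>(w, E)\<close> the solution \<open>\<xi> = g w E\<close> is the fixed point of the chord map
  \<open>\<xi> \<mapsto> \<xi> - (f (\<phi> \<xi> w) - E) / \<mu>\<close>. Since all second derivatives of \<open>f\<close> are bounded by \<open>M2\<close>,
  the normal derivative of \<open>f\<close> stays within \<open>\<mu>/4\<close> of \<open>\<mu>\<close> on the polydisc of radius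
  \<open>2 \<rho>1\<close>, so the chord map is a \<open>1/4\<close>-contraction there; as \<open>\<nabla>f(x0)\<close> is orthogonal to the
  frame, second-order Taylor expansion bounds its value at \<open>0\<close>, and the Banach fixed point
  theorem gives existence, uniqueness and estimate (a). The contraction estimate also yields
  continuity of \<open>g\<close>, and the inverse function theorem applied to
  \<open>(w, \<xi>) \<mapsto> (w, f (\<phi> \<xi> w))\<close> upgrades this to analyticity. For (b), the real point
  \<open>x0'\<close> has real normal coordinates, which solve the equation, so uniqueness identifies
  them with \<open>g\<close>.\<close>

section \<open>Sup-norm and complex scaling\<close>

lemma supn_less_iff: "supn z < r \<longleftrightarrow> (\<forall>i. norm (z $ i) < r)"
  unfolding supn_def by (subst Max_less_iff) auto

lemma supn_le_iff: "supn z \<le> r \<longleftrightarrow> (\<forall>i. norm (z $ i) \<le> r)"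
  unfolding supn_def by (subst Max_le_iff) auto

lemma norm_nth_le_supn: "norm (z $ i) \<le> supn z"
  using supn_le_iff by blast

lemma supn_nonneg: "0 \<le> supn z"
  using norm_nth_le_supn[of z] norm_ge_zero order_trans by blast

lemma cscale_nth [simp]: "cscale a v $ i = a * v $ i"
  by (simp add: cscale_def)

lemma cvec_nth [simp]: "cvec x $ i = complex_of_real (x $ i)"
  by (simp add: cvec_def)

lemma supn_add_le: "supn (a + b) \<le> supn a + supn b"
  unfolding supn_le_iff
proof
  fix i
  have "norm ((a + b) $ i) \<le> norm (a $ i) + norm (b $ i)" by (simp add: norm_triangle_ineq)
  also have "\<dots> \<le> supn a + supn b" by (intro add_mono norm_nth_le_supn)
  finally show "norm ((a + b) $ i) \<le> supn a + supn b" .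
qed

lemma supn_cscale_le: "supn (cscale a v) \<le> norm a * supn v"
  unfolding supn_le_iff by (simp add: norm_mult mult_left_mono norm_nth_le_supn)

lemma supn_sum_le: "supn (\<Sum>j\<in>A. G j) \<le> (\<Sum>j\<in>A. supn (G j))"
proof (induction A rule: infinite_finite_induct)
  case (insert x F)
  then show ?case using supn_add_le[of "G x" "sum G F"] by simp
qed (simp_all add: supn_def)

lemma supn_cvec_le: "supn (cvec x) \<le> norm x"
  unfolding supn_le_iff by (simp add: component_le_norm_cart)

lemma polydisc_iff: "supn (w - c) < \<rho> \<longleftrightarrow> (\<forall>k. w $ k \<in> ball (c $ k) \<rho>)"
  unfolding supn_less_iff by (simp add: dist_norm norm_minus_commute)

lemma norm_axis: "norm (axis i (t::'a::real_normed_vector) :: 'a^'n) = norm t"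
proof -
  have "(\<Sum>k\<in>UNIV. (norm (axis i t $ k))\<^sup>2) = (\<Sum>k\<in>UNIV. if k = i then (norm t)\<^sup>2 else 0)"
    by (rule sum.cong) (auto simp: axis_def)
  then show ?thesis unfolding norm_vec_def L2_set_def by simp
qed

lemma axis_zero [simp]: "axis i 0 = 0"
  by (simp add: vec_eq_iff axis_def)

lemma cscale_zero_left [simp]: "cscale 0 v = 0"
  by (simp add: vec_eq_iff)

lemma cscale_add_left: "cscale (a + b) v = cscale a v + cscale b v"
  by (simp add: vec_eq_iff algebra_simps)

lemma cscale_add_right: "cscale a (v + w) = cscale a v + cscale a w"
  by (simp add: vec_eq_iff algebra_simps)

lemma cscale_mult: "cscale a (cscale b v) = cscale (a * b) v"
  by (simp add: vec_eq_iff algebra_simps)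

lemma cscale_sum: "cscale a (\<Sum>j\<in>A. F j) = (\<Sum>j\<in>A. cscale a (F j))"
  by (simp add: vec_eq_iff sum_component sum_distrib_left)

lemma scaleR_eq_cscale: "r *\<^sub>R h = cscale (of_real r) h"
  by (simp add: vec_eq_iff) (simp add: scaleR_conv_of_real)

lemma cscale_scaleR_left: "cscale (r *\<^sub>R a) v = r *\<^sub>R cscale a v"
  by (simp add: scaleR_eq_cscale cscale_mult scaleR_conv_of_real)

lemma bounded_linear_cscale_left: "bounded_linear (\<lambda>t. cscale t v)"
proof -
  have "linear (\<lambda>t. cscale t v)"
    by (intro linearI) (simp_all add: cscale_add_left cscale_scaleR_left)
  then show ?thesis by (simp add: linear_conv_bounded_linear)
qed

lemma axis_eq_cscale: "axis j t = cscale t (axis j 1)"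
  by (simp add: vec_eq_iff axis_def)

lemma complex_linear_cscale:
  assumes "linear D" "\<And>h. D (cscale \<i> h) = \<i> * D h"
  shows "D (cscale a h) = a * (D h :: complex)"
proof -
  have "cscale a h = Re a *\<^sub>R h + Im a *\<^sub>R cscale \<i> h"
    by (simp add: vec_eq_iff algebra_simps) (simp add: complex_eq_iff)
  then have "D (cscale a h) = Re a *\<^sub>R D h + Im a *\<^sub>R D (cscale \<i> h)"
    using assms(1) by (simp add: linear_add linear_scale)
  also have "\<dots> = a * D h" using assms(2)
    by (simp add: scaleR_conv_of_real complex_eq_iff)
  finally show ?thesis .
qed

section \<open>The complex differential\<close>

definition cdifferential :: "(complex^'n \<Rightarrow> complex) \<Rightarrow> complex^'n \<Rightarrow> complex^'n \<Rightarrow> complex" where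
  "cdifferential f z h = (\<Sum>j\<in>UNIV. h $ j * cpd j f z)"

lemma cdifferential_add: "cdifferential f z (h + k) = cdifferential f z h + cdifferential f z k"
  by (simp add: cdifferential_def sum.distrib algebra_simps)

lemma cdifferential_cscale: "cdifferential f z (cscale a h) = a * cdifferential f z h"
  by (simp add: cdifferential_def sum_distrib_left algebra_simps)

lemma cdifferential_sum: "cdifferential f z (\<Sum>j\<in>A. H j) = (\<Sum>j\<in>A. cdifferential f z (H j))"
  by (induction A rule: infinite_finite_induct)
    (simp_all add: cdifferential_add, simp_all add: cdifferential_def)

lemma cdifferential_axis: "cdifferential f z (axis i 1) = cpd i f z"
proof -
  have "cdifferential f z (axis i 1) = (\<Sum>j\<in>UNIV. if j = i then cpd i f z else 0)"
    unfolding cdifferential_def by (rule sum.cong) (auto simp: axis_def)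
  then show ?thesis by simp
qed

lemma linear_cdifferential: "linear (cdifferential f z)"
  by (intro linearI)
    (simp_all add: cdifferential_add scaleR_eq_cscale cdifferential_cscale scaleR_conv_of_real)

lemma has_field_derivative_along_line:
  assumes "(f has_derivative D) (at (y + cscale t0 v))" "linear D" "\<And>h. D (cscale \<i> h) = \<i> * D h"
  shows "((\<lambda>t. f (y + cscale t v)) has_field_derivative D v) (at t0)"
proof -
  have "((\<lambda>t. y + cscale t v) has_derivative (\<lambda>t. cscale t v)) (at t0)"
    using has_derivative_add[OF has_derivative_const
        bounded_linear_imp_has_derivative[OF bounded_linear_cscale_left[of v]], of y]
    by simp
  from diff_chain_at[OF this assms(1)]
  have "((\<lambda>t. f (y + cscale t v)) has_derivative (\<lambda>t. D (cscale t v))) (at t0)"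
    by (simp add: o_def)
  moreover have "(\<lambda>t. D (cscale t v)) = (*) (D v)"
    using complex_linear_cscale[OF assms(2,3)] by (auto simp: mult.commute)
  ultimately show ?thesis by (simp add: has_field_derivative_def)
qed

lemma complex_linear_derivative_eq_cdifferential:
  fixes f :: "complex^'n \<Rightarrow> complex"
  assumes "(f has_derivative D) (at z)" "linear D" "\<And>h. D (cscale \<i> h) = \<i> * D h"
  shows "D = cdifferential f z"
proof
  fix h :: "complex^'n"
  have cpd: "cpd j f z = D (axis j 1)" for j
  proof -
    have "((\<lambda>t. f (z + cscale t (axis j 1))) has_field_derivative D (axis j 1)) (at 0)"
      by (rule has_field_derivative_along_line) (use assms in auto)
    moreover have "(\<lambda>t. f (z + cscale t (axis j 1))) = (\<lambda>t. f (z + axis j t))"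
      by (simp add: axis_eq_cscale[symmetric])
    ultimately show ?thesis unfolding cpd_def by (metis DERIV_imp_deriv)
  qed
  have "h = (\<Sum>j\<in>UNIV. cscale (h $ j) (axis j 1))"
    by (simp add: vec_eq_iff axis_def sum_component if_distrib cong: if_cong)
  then have "D h = (\<Sum>j\<in>UNIV. D (cscale (h $ j) (axis j 1)))"
    using linear_sum[OF assms(2)] by metis
  also have "\<dots> = cdifferential f z h"
    by (simp add: cdifferential_def complex_linear_cscale[OF assms(2,3)] cpd)
  finally show "D h = cdifferential f z h" .
qed

lemma cdiff_on_has_derivative:
  assumes "cdiff_on f (cscale \<i>) S" "z \<in> S"
  shows "(f has_derivative cdifferential f z) (at z)"
proof -
  obtain D where "(f has_derivative D) (at z)" "\<And>h. D (cscale \<i> h) = \<i> * D h"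
    using assms unfolding cdiff_on_def by blast
  with complex_linear_derivative_eq_cdifferential show ?thesis
    by (metis has_derivative_linear)
qed

lemma cdiff_on_imp_continuous_on:
  assumes "cdiff_on f (cscale \<i>) S"
  shows "continuous_on S (f :: complex^'n \<Rightarrow> complex)"
  using has_derivative_continuous[OF cdiff_on_has_derivative[OF assms]]
  by (intro continuous_at_imp_continuous_on) blast

lemma cdiff_on_has_field_derivative_along_line:
  assumes "cdiff_on f (cscale \<i>) S" "y + cscale t0 v \<in> S"
  shows "((\<lambda>t. f (y + cscale t v)) has_field_derivative cdifferential f (y + cscale t0 v) v) (at t0)"
  by (rule has_field_derivative_along_line[OF cdiff_on_has_derivative[OF assms] linear_cdifferential])
    (simp add: cdifferential_cscale)

lemma cdiff_on_has_field_derivative_along_axis: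
  assumes "cdiff_on f (cscale \<i>) S" "y + axis i s \<in> S"
  shows "((\<lambda>s. f (y + axis i s)) has_field_derivative cpd i f (y + axis i s)) (at s)"
  using cdiff_on_has_field_derivative_along_line[OF assms(1), of y s "axis i 1"] assms(2)
  by (simp add: cdifferential_axis axis_eq_cscale[symmetric])

lemma cdiff_on_holomorphic_along_axis:
  assumes "cdiff_on f (cscale \<i>) S" "\<And>s. s \<in> A \<Longrightarrow> y + axis i s \<in> S"
  shows "(\<lambda>s. f (y + axis i s)) holomorphic_on A"
  unfolding holomorphic_on_def field_differentiable_def
  using cdiff_on_has_field_derivative_along_axis[OF assms(1)] assms(2)
  by (blast intro: has_field_derivative_at_within)

section \<open>Estimates for holomorphic functions\<close>

lemma holomorphic_second_deriv_bound:
  fixes h :: "complex \<Rightarrow> complex"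
  assumes hol: "h holomorphic_on ball 0 R" and \<delta>: "0 < \<delta>" "\<delta> < R"
    and B: "\<And>u. norm u \<le> \<delta> \<Longrightarrow> norm (h u) \<le> B"
    and u: "norm u \<le> \<delta> / 2"
  shows "norm (deriv (deriv h) u) \<le> 8 * B / \<delta>^2"
proof -
  have tri: "norm x \<le> norm u + norm (u - x)" for x :: complex
    using norm_triangle_ineq4[of u "u - x"] by simp
  have csub: "cball u (\<delta>/2) \<subseteq> ball 0 R"
  proof
    fix x assume "x \<in> cball u (\<delta>/2)"
    then have "norm (u - x) \<le> \<delta>/2" by (simp add: dist_norm)
    then show "x \<in> ball 0 R" using tri[of x] u \<delta> by simp
  qed
  have "norm ((deriv ^^ 2) h u) \<le> fact 2 * B / (\<delta>/2)^2"
  proof (rule Cauchy_inequality)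
    show "h holomorphic_on ball u (\<delta> / 2)" using hol csub holomorphic_on_subset by force
    show "continuous_on (cball u (\<delta> / 2)) h"
      using holomorphic_on_imp_continuous_on[OF hol] csub continuous_on_subset by blast
    fix x assume "norm (u - x) = \<delta>/2"
    then show "norm (h x) \<le> B" using u tri[of x] by (intro B) simp
  qed (use \<delta> in simp)
  moreover have "(deriv ^^ 2) h u = deriv (deriv h) u" by (simp add: numeral_2_eq_2)
  ultimately show ?thesis by (simp add: power_divide)
qed

lemma holomorphic_first_order_remainder_bound:
  fixes h :: "complex \<Rightarrow> complex"
  assumes hol: "h holomorphic_on ball 0 R" and \<delta>: "0 < \<delta>" "\<delta> < R"
    and B: "\<And>u. norm u \<le> \<delta> \<Longrightarrow> norm (h u) \<le> B"
    and t: "norm t \<le> \<delta> / 2"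
  shows "norm (h t - h 0 - t * deriv h 0) \<le> 8 * B / \<delta>^2 * (norm t)^2"
proof -
  define L where "L = 8 * B / \<delta>^2"
  have ddb: "norm (deriv (deriv h) u) \<le> L" if "norm u \<le> \<delta>/2" for u
    unfolding L_def using holomorphic_second_deriv_bound[OF hol \<delta> B that] by blast
  have "norm (deriv (deriv h) 0) \<le> L" using ddb \<delta> by simp
  then have L: "0 \<le> L" using norm_ge_zero order_trans by blast
  have opn: "open (ball (0::complex) R)" by simp
  have hd: "(h has_field_derivative deriv h u) (at u)" if "norm u < R" for u
    using hol that
    by (meson DERIV_deriv_iff_field_differentiable holomorphic_on_imp_differentiable_at opn mem_ball_0)
  have dd: "(deriv h has_field_derivative deriv (deriv h) u) (at u)" if "norm u < R" for u
    using holomorphic_deriv[OF hol opn] that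
    by (meson DERIV_deriv_iff_field_differentiable holomorphic_on_imp_differentiable_at opn mem_ball_0)
  have dlip: "norm (deriv h u - deriv h 0) \<le> L * norm u" if "norm u \<le> \<delta>/2" for u
  proof -
    have "norm (deriv h u - deriv h 0) \<le> L * norm (u - 0)"
    proof (rule field_differentiable_bound[where S = "cball 0 (\<delta>/2)" and f' = "deriv (deriv h)"])
      fix z :: complex assume "z \<in> cball 0 (\<delta>/2)"
      then have "norm z \<le> \<delta>/2" by simp
      then show "(deriv h has_field_derivative deriv (deriv h) z) (at z within cball 0 (\<delta>/2))"
        and "norm (deriv (deriv h) z) \<le> L"
        using dd[of z] ddb[of z] \<delta> by (auto intro: has_field_derivative_at_within)
    qed (use that \<delta> in auto)
    then show ?thesis by simp
  qed
  define g where "g u = h u - u * deriv h 0" for u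
  have "norm (g t - g 0) \<le> (L * norm t) * norm (t - 0)"
  proof (rule field_differentiable_bound[where S = "closed_segment 0 t" and f' = "\<lambda>u. deriv h u - deriv h 0"])
    fix z assume "z \<in> closed_segment 0 t"
    then obtain v where "0 \<le> v" "v \<le> 1" "z = v *\<^sub>R t"
      unfolding closed_segment_def by auto
    then have nz: "norm z \<le> norm t"
      using mult_left_le_one_le[of "norm t" v] by simp
    have "(g has_field_derivative deriv h z - 1 * deriv h 0) (at z)"
      unfolding g_def using nz t \<delta> by (intro DERIV_diff hd DERIV_cmult_right DERIV_ident) auto
    then show "(g has_field_derivative deriv h z - deriv h 0) (at z within closed_segment 0 t)"
      by (simp add: has_field_derivative_at_within)
    show "norm (deriv h z - deriv h 0) \<le> L * norm t"
      using dlip[of z] nz t mult_left_mono[OF nz L] by simp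
  qed auto
  moreover have "g t - g 0 = h t - h 0 - t * deriv h 0" by (simp add: g_def)
  ultimately show ?thesis by (simp add: L_def power2_eq_square)
qed

lemma uniform_limit_difference_quotient:
  fixes G :: "'a \<Rightarrow> complex \<Rightarrow> complex"
  assumes \<delta>: "0 < \<delta>" and L: "0 < L"
    and remainder: "\<And>s t. s \<in> S \<Longrightarrow> norm t \<le> \<delta> \<Longrightarrow> norm (G s t - G s 0 - t * K s) \<le> L * (norm t)^2"
  shows "uniform_limit S (\<lambda>t s. (G s t - G s 0) / t) K (at 0)"
  unfolding uniform_limit_iff
proof (intro allI impI)
  fix \<epsilon> :: real assume "\<epsilon> > 0"
  define \<eta> where "\<eta> = min \<delta> (\<epsilon> / L)"
  have \<eta>: "\<eta> > 0" using \<delta> L \<open>\<epsilon> > 0\<close> by (simp add: \<eta>_def)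
  show "\<forall>\<^sub>F t in at 0. \<forall>s\<in>S. dist ((G s t - G s 0) / t) (K s) < \<epsilon>"
    unfolding eventually_at
  proof (intro exI[of _ \<eta>] conjI \<eta> ballI impI)
    fix t :: complex and s assume t: "t \<noteq> 0 \<and> dist t 0 < \<eta>" and s: "s \<in> S"
    have "(G s t - G s 0) / t - K s = (G s t - G s 0 - t * K s) / t"
      using t by (simp add: field_simps)
    then have "dist ((G s t - G s 0) / t) (K s) = norm (G s t - G s 0 - t * K s) / norm t"
      by (simp add: dist_norm norm_divide)
    also have "\<dots> \<le> L * (norm t)^2 / norm t"
      using remainder[OF s, of t] t \<eta>_def by (intro divide_right_mono) auto
    also have "\<dots> = L * norm t"
      by (simp add: power2_eq_square)
    also have "\<dots> < L * (\<epsilon> / L)"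
      using t \<eta>_def L by (intro mult_strict_left_mono) auto
    also have "\<dots> = \<epsilon>" using L by simp
    finally show "dist ((G s t - G s 0) / t) (K s) < \<epsilon>" .
  qed
qed

text \<open>The difference quotients in \<open>t\<close> are holomorphic in \<open>s\<close> and, by the Cauchy estimate in
  \<open>t\<close>, converge to \<open>deriv (G s) 0\<close> uniformly in \<open>s\<close>.\<close>
lemma deriv_holomorphic_in_parameter:
  fixes G :: "complex \<Rightarrow> complex \<Rightarrow> complex"
  assumes \<delta>: "0 < \<delta>" and B: "0 < B"
    and hol_t: "\<And>s. norm s \<le> \<delta> \<Longrightarrow> G s holomorphic_on ball 0 (2*\<delta>)"
    and hol_s: "\<And>t. norm t \<le> \<delta> \<Longrightarrow> (\<lambda>s. G s t) holomorphic_on ball 0 (2*\<delta>)"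
    and bound: "\<And>s t. norm s \<le> \<delta> \<Longrightarrow> norm t \<le> \<delta> \<Longrightarrow> norm (G s t) \<le> B"
  shows "(\<lambda>s. deriv (G s) 0) holomorphic_on ball 0 \<delta>"
proof -
  define Q where "Q t s = (G s t - G s 0) / t" for t s
  have "uniform_limit (cball 0 \<delta>) Q (\<lambda>s. deriv (G s) 0) (at 0)"
    unfolding Q_def
  proof (rule uniform_limit_difference_quotient[where \<delta> = "\<delta>/2" and L = "8 * B / \<delta>^2"])
    fix s t :: complex assume "s \<in> cball 0 \<delta>" "norm t \<le> \<delta>/2"
    then show "norm (G s t - G s 0 - t * deriv (G s) 0) \<le> 8 * B / \<delta>^2 * (norm t)^2"
      using \<delta> bound by (intro holomorphic_first_order_remainder_bound[OF hol_t]) auto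
  qed (use \<delta> B in auto)
  moreover have "\<forall>\<^sub>F t in at 0. continuous_on (cball 0 \<delta>) (Q t) \<and> Q t holomorphic_on ball 0 \<delta>"
    unfolding eventually_at
  proof (intro exI[of _ \<delta>] conjI \<delta> ballI impI)
    fix t :: complex assume t: "t \<noteq> 0 \<and> dist t 0 < \<delta>"
    have "Q t holomorphic_on ball 0 (2*\<delta>)"
      unfolding Q_def using t \<delta> by (intro holomorphic_intros hol_s) auto
    moreover have "cball 0 \<delta> \<subseteq> ball (0::complex) (2*\<delta>)" using \<delta> by auto
    ultimately show "continuous_on (cball 0 \<delta>) (Q t)" "Q t holomorphic_on ball 0 \<delta>"
      by (meson holomorphic_on_imp_continuous_on continuous_on_subset holomorphic_on_subset
          ball_subset_cball subset_trans)+
  qed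
  ultimately show ?thesis
    using holomorphic_uniform_limit trivial_limit_at by blast
qed

lemma cpd_has_field_derivative_along_axis:
  fixes f :: "complex^'n \<Rightarrow> complex"
  assumes cd: "cdiff_on f (cscale \<i>) S" and z: "z \<in> S"
  shows "((\<lambda>s. cpd j f (z + axis i s)) has_field_derivative cpd i (cpd j f) z) (at 0)"
proof -
  obtain \<epsilon> where \<epsilon>: "\<epsilon> > 0" "ball z \<epsilon> \<subseteq> S"
    using cd z unfolding cdiff_on_def by (meson open_contains_ball)
  define \<delta> where "\<delta> = \<epsilon>/3"
  have \<delta>: "\<delta> > 0" using \<epsilon> by (simp add: \<delta>_def)
  define G where "G = (\<lambda>s t. f (z + axis i s + axis j t))"
  have dist_eq: "dist z (z + axis i s + axis j t) \<le> norm s + norm t" for s t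
  proof -
    have "dist z (z + axis i s + axis j t) = norm (axis i s + axis j t)"
      by (metis add.assoc add_diff_cancel_left' dist_commute dist_norm)
    then show ?thesis
      using norm_triangle_ineq[of "axis i s :: complex^'n" "axis j t"] by (simp add: norm_axis)
  qed
  have inS: "z + axis i s + axis j t \<in> S" if "norm s + norm t < 3*\<delta>" for s t
    using \<epsilon> dist_eq[of s t] that by (force simp: \<delta>_def)
  have "cball z (2*\<delta>) \<subseteq> S" using \<epsilon> by (auto simp: \<delta>_def)
  then have "compact (f ` cball z (2*\<delta>))"
    using cdiff_on_imp_continuous_on[OF cd]
    by (intro compact_continuous_image compact_cball) (rule continuous_on_subset)
  then obtain B where B: "B > 0" "\<forall>x\<in>f ` cball z (2*\<delta>). norm x \<le> B"
    using compact_imp_bounded bounded_pos by metis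
  have "(\<lambda>s. deriv (G s) 0) holomorphic_on ball 0 \<delta>"
  proof (rule deriv_holomorphic_in_parameter[OF \<delta> B(1)])
    fix s t :: complex assume "norm s \<le> \<delta>" "norm t \<le> \<delta>"
    then show "norm (G s t) \<le> B" using B(2) dist_eq[of s t] by (auto simp: G_def)
  next
    fix s :: complex assume "norm s \<le> \<delta>"
    then show "G s holomorphic_on ball 0 (2*\<delta>)"
      unfolding G_def using inS by (intro cdiff_on_holomorphic_along_axis[OF cd]) auto
  next
    fix t :: complex assume "norm t \<le> \<delta>"
    then have "(\<lambda>s. f ((z + axis j t) + axis i s)) holomorphic_on ball 0 (2*\<delta>)"
      using inS by (intro cdiff_on_holomorphic_along_axis[OF cd]) (auto simp: add_ac)
    then show "(\<lambda>s. G s t) holomorphic_on ball 0 (2*\<delta>)"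
      by (simp add: G_def add_ac)
  qed
  then have "(\<lambda>s. deriv (G s) 0) field_differentiable (at 0)"
    using \<delta> by (intro holomorphic_on_imp_differentiable_at) auto
  moreover have "(\<lambda>s. deriv (G s) 0) = (\<lambda>s. cpd j f (z + axis i s))"
    by (simp add: G_def cpd_def)
  ultimately show ?thesis
    unfolding cpd_def[of i] by (simp add: DERIV_deriv_iff_field_differentiable)
qed

lemma add_segment_mem_convex:
  fixes a :: "'a::real_normed_vector"
  assumes "convex S" "a \<in> S" "a + t \<in> S" "s \<in> closed_segment 0 t"
  shows "a + s \<in> S"
proof -
  have "a + s \<in> closed_segment a (a + t)"
    using assms(4) unfolding closed_segment_def by (auto simp: algebra_simps)
  then show ?thesis using closed_segment_subset[OF assms(2,3,1)] by blast
qed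

lemma norm_diff_along_axis_le:
  fixes F :: "complex^'n \<Rightarrow> complex"
  assumes convex: "\<And>k. convex (U k)"
    and deriv: "\<And>x i. \<forall>k. x $ k \<in> U k \<Longrightarrow> ((\<lambda>s. F (x + axis i s)) has_field_derivative F' i x) (at 0)"
    and bound: "\<And>x i. \<forall>k. x $ k \<in> U k \<Longrightarrow> norm (F' i x) \<le> L"
    and y: "\<forall>k. y $ k \<in> U k" and yt: "y $ i + t \<in> U i"
  shows "norm (F (y + axis i t) - F y) \<le> L * norm t"
proof -
  have inU: "\<forall>k. (y + axis i s) $ k \<in> U k" if "s \<in> closed_segment 0 t" for s
    using y add_segment_mem_convex[OF convex _ yt that] by (auto simp: axis_def)
  have "norm (F (y + axis i t) - F (y + axis i 0)) \<le> L * norm (t - 0)"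
  proof (rule field_differentiable_bound[where S = "closed_segment 0 t"])
    fix s assume s: "s \<in> closed_segment 0 t"
    have "(\<lambda>u. F ((y + axis i s) + axis i u)) = (\<lambda>u. F (y + axis i (u + s)))"
      by (intro ext arg_cong[where f = F]) (simp add: vec_eq_iff axis_def)
    then have "((\<lambda>u. F (y + axis i u)) has_field_derivative F' i (y + axis i s)) (at s)"
      using deriv[OF inU[OF s], of i]
        DERIV_shift[of "\<lambda>u. F (y + axis i u)" "F' i (y + axis i s)" 0 s] by simp
    then show "((\<lambda>u. F (y + axis i u)) has_field_derivative F' i (y + axis i s))
        (at s within closed_segment 0 t)"
      by (simp add: has_field_derivative_at_within)
    show "norm (F' i (y + axis i s)) \<le> L" using bound inU s by blast
  qed auto
  then show ?thesis by simp
qed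

text \<open>Change one coordinate at a time.\<close>
lemma norm_diff_le_partials_bound:
  fixes F :: "complex^'n \<Rightarrow> complex"
  assumes convex: "\<And>k. convex (U k)"
    and deriv: "\<And>x i. \<forall>k. x $ k \<in> U k \<Longrightarrow> ((\<lambda>s. F (x + axis i s)) has_field_derivative F' i x) (at 0)"
    and bound: "\<And>x i. \<forall>k. x $ k \<in> U k \<Longrightarrow> norm (F' i x) \<le> L"
    and c: "\<forall>k. c $ k \<in> U k" and z: "\<forall>k. z $ k \<in> U k"
  shows "norm (F z - F c) \<le> L * (\<Sum>k\<in>UNIV. norm (z $ k - c $ k))"
proof -
  note step = norm_diff_along_axis_le[OF convex deriv bound]
  define zA where "zA A = (\<chi> k. if k \<in> A then z $ k else c $ k)" for A
  have "norm (F (zA A) - F c) \<le> L * (\<Sum>k\<in>A. norm (z $ k - c $ k))" if "finite A" for A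
    using that
  proof (induction A rule: finite_induct)
    case empty
    have "zA {} = c" by (simp add: zA_def vec_eq_iff)
    then show ?case by simp
  next
    case (insert a A)
    have "zA (insert a A) = zA A + axis a (z $ a - c $ a)"
      using insert(2) by (auto simp: zA_def vec_eq_iff axis_def)
    moreover have "\<forall>k. zA A $ k \<in> U k" "zA A $ a + (z $ a - c $ a) \<in> U a"
      using insert(2) c z by (auto simp: zA_def)
    ultimately have "norm (F (zA (insert a A)) - F (zA A)) \<le> L * norm (z $ a - c $ a)"
      using step[where y = "zA A" and i = a and t = "z $ a - c $ a"] by simp
    then have "norm (F (zA (insert a A)) - F c) \<le> L * norm (z $ a - c $ a) + L * (\<Sum>k\<in>A. norm (z $ k - c $ k))"
      using insert(3) norm_triangle_ineq[of "F (zA (insert a A)) - F (zA A)" "F (zA A) - F c"] by simp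
    then show ?case using insert(1,2) by (simp add: distrib_left)
  qed
  from this[of UNIV] show ?thesis by (simp add: zA_def)
qed

lemma cpd_lipschitz_on_polydisc:
  fixes f :: "complex^'n \<Rightarrow> complex"
  assumes cd: "cdiff_on f (cscale \<i>) {w. supn (w - c) < \<rho>}"
    and M: "\<And>w i j. supn (w - c) < \<rho> \<Longrightarrow> norm (cpd i (cpd j f) w) \<le> M"
    and y: "supn (y - c) < \<rho>"
  shows "norm (cpd j f y - cpd j f c) \<le> M * (\<Sum>k\<in>UNIV. norm (y $ k - c $ k))"
proof (rule norm_diff_le_partials_bound[where U = "\<lambda>k. ball (c $ k) \<rho>"])
  have "\<rho> > 0" using y supn_nonneg[of "y - c"] by linarith
  then show "\<forall>k. c $ k \<in> ball (c $ k) \<rho>" "\<forall>k. y $ k \<in> ball (c $ k) \<rho>"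
    using y by (auto simp: polydisc_iff)
  fix x i assume "\<forall>k. x $ k \<in> ball (c $ k) \<rho>"
  then have "x \<in> {w. supn (w - c) < \<rho>}" by (simp add: polydisc_iff)
  then show "((\<lambda>s. cpd j f (x + axis i s)) has_field_derivative cpd i (cpd j f) x) (at 0)"
    and "norm (cpd i (cpd j f) x) \<le> M"
    using cpd_has_field_derivative_along_axis[OF cd] M by auto
qed simp

lemma linear_remainder_has_field_derivative_along_axis:
  assumes "cdiff_on f (cscale \<i>) S" "x \<in> S"
  shows "((\<lambda>s. f (x + axis i s) - cdifferential f c (x + axis i s - c))
      has_field_derivative cpd i f x - cpd i f c) (at 0)"
proof -
  have "x + axis i 0 \<in> S" using assms(2) by simp
  from cdiff_on_has_field_derivative_along_axis[OF assms(1) this]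
  have "((\<lambda>s. f (x + axis i s) - (cdifferential f c (x - c) + s * cpd i f c))
      has_field_derivative cpd i f x - (0 + 1 * cpd i f c)) (at 0)"
    by (intro DERIV_diff DERIV_add DERIV_const DERIV_cmult_right DERIV_ident) simp
  moreover have "cdifferential f c (x + axis i s - c) = cdifferential f c (x - c) + s * cpd i f c" for s
  proof -
    have "x + axis i s - c = (x - c) + cscale s (axis i 1)"
      by (simp add: axis_eq_cscale[symmetric] algebra_simps)
    then show ?thesis by (simp only: cdifferential_add cdifferential_cscale cdifferential_axis)
  qed
  ultimately show ?thesis by simp
qed

lemma first_order_taylor_on_polydisc:
  fixes f :: "complex^'n \<Rightarrow> complex"
  assumes cd: "cdiff_on f (cscale \<i>) {w. supn (w - c) < \<rho>}"
    and M: "\<And>w i j. supn (w - c) < \<rho> \<Longrightarrow> norm (cpd i (cpd j f) w) \<le> M"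
    and u: "supn u < \<rho>"
  shows "norm (f (c + u) - f c - cdifferential f c u) \<le> real CARD('n) ^ 2 * M * (supn u)^2"
proof -
  define R where "R = supn u"
  define N where "N = real CARD('n)"
  have R: "0 \<le> R" "R < \<rho>" using u supn_nonneg by (auto simp: R_def)
  have M0: "0 \<le> M" using M[of c] R by (simp add: supn_def) (meson norm_ge_zero order_trans)
  have sum_le: "(\<Sum>k\<in>UNIV. norm (w $ k - c $ k)) \<le> N * R" if "\<forall>k. w $ k \<in> cball (c $ k) R" for w
    using that sum_bounded_above[of UNIV "\<lambda>k. norm (w $ k - c $ k)" R]
    by (simp add: N_def dist_norm norm_minus_commute)
  have in_polydisc: "supn (w - c) < \<rho>" if "\<forall>k. w $ k \<in> cball (c $ k) R" for w
  proof -
    have "norm ((w - c) $ k) \<le> R" for k using that by (simp add: dist_norm norm_minus_commute)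
    then show ?thesis using R unfolding supn_less_iff by (meson order_le_less_trans)
  qed
  define F where "F y = f y - cdifferential f c (y - c)" for y
  have "norm (F (c + u) - F c) \<le> (M * (N * R)) * (\<Sum>k\<in>UNIV. norm ((c + u) $ k - c $ k))"
  proof (rule norm_diff_le_partials_bound[where U = "\<lambda>k. cball (c $ k) R"])
    show "\<forall>k. c $ k \<in> cball (c $ k) R" "\<forall>k. (c + u) $ k \<in> cball (c $ k) R"
      using R by (auto simp: dist_norm R_def norm_nth_le_supn)
    fix x i assume x: "\<forall>k. x $ k \<in> cball (c $ k) R"
    have "x \<in> {w. supn (w - c) < \<rho>}" using in_polydisc[OF x] by simp
    then show "((\<lambda>s. F (x + axis i s)) has_field_derivative cpd i f x - cpd i f c) (at 0)"
      unfolding F_def by (rule linear_remainder_has_field_derivative_along_axis[OF cd])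
    have "norm (cpd i f x - cpd i f c) \<le> M * (\<Sum>k\<in>UNIV. norm (x $ k - c $ k))"
      by (rule cpd_lipschitz_on_polydisc[OF cd M in_polydisc[OF x]])
    also have "\<dots> \<le> M * (N * R)" by (intro mult_left_mono M0 sum_le x)
    finally show "norm (cpd i f x - cpd i f c) \<le> M * (N * R)" .
  qed simp
  also have "\<dots> \<le> (M * (N * R)) * (N * R)"
    using M0 R by (intro mult_left_mono sum_le) (auto simp: R_def N_def dist_norm norm_nth_le_supn)
  also have "\<dots> = N^2 * M * R^2" by (simp add: power2_eq_square)
  finally have "norm (F (c + u) - F c) \<le> N^2 * M * R^2" .
  moreover have "F (c + u) - F c = f (c + u) - f c - cdifferential f c u"
    by (simp add: F_def cdifferential_def)
  ultimately show ?thesis by (simp add: N_def R_def)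
qed

lemma cpd_eq_rgrad:
  fixes f :: "complex^'n \<Rightarrow> complex"
  assumes cd: "cdiff_on f (cscale \<i>) {z. supn (z - cvec x0) < \<rho>}" and \<rho>: "\<rho> > 0"
    and real: "\<forall>x. supn (cvec x - cvec x0) < \<rho> \<longrightarrow> f (cvec x) \<in> \<real>"
  shows "cpd j f (cvec x0) = complex_of_real (rgrad f x0 $ j)"
proof -
  have line: "cvec (x0 + axis j r) = cvec x0 + axis j (of_real r)" for r
    by (simp add: vec_eq_iff axis_def)
  have "cvec x0 + axis j 0 \<in> {z. supn (z - cvec x0) < \<rho>}"
    using \<rho> by (simp add: supn_less_iff axis_def)
  from cdiff_on_has_field_derivative_along_axis[OF cd this]
  have "((\<lambda>t. f (cvec x0 + axis j t)) has_field_derivative cpd j f (cvec x0)) (at (of_real 0))"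
    by simp
  from has_vector_derivative_real_field[OF this, of UNIV]
  have F: "((\<lambda>r. f (cvec (x0 + axis j r))) has_vector_derivative cpd j f (cvec x0)) (at 0)"
    by (simp add: line)
  have "Im (f (cvec (x0 + axis j r))) = 0" if "r \<in> ball 0 \<rho>" for r
  proof -
    have "cvec (x0 + axis j r) - cvec x0 = cvec (axis j r)" by (simp add: vec_eq_iff)
    then have "supn (cvec (x0 + axis j r) - cvec x0) \<le> norm (axis j r :: real^'n)"
      using supn_cvec_le[of "axis j r"] by simp
    also have "\<dots> < \<rho>" using that by (simp add: norm_axis)
    finally show ?thesis using real by (simp add: complex_is_Real_iff)
  qed
  then have "((\<lambda>r. 0) has_field_derivative Im (cpd j f (cvec x0))) (at (0::real))"
    using \<rho> by (intro has_field_derivative_transform_within_open[OF has_field_derivative_Im[OF F],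
        where S = "ball 0 \<rho>"]) auto
  then have "Im (cpd j f (cvec x0)) = 0" using DERIV_unique[OF DERIV_const] by metis
  moreover have "rgrad f x0 $ j = Re (cpd j f (cvec x0))"
    unfolding rgrad_def using DERIV_imp_deriv[OF has_field_derivative_Re[OF F]] by simp
  ultimately show ?thesis by (simp add: complex_eq_iff)
qed

section \<open>Solving for the normal coordinate\<close>

lemma orthonormal_frame_expansion:
  fixes nv :: "real^'n" and e :: "'m::finite \<Rightarrow> real^'n"
  assumes card: "CARD('n) = CARD('m) + 1" and nv: "nv \<bullet> nv = 1"
    and eo: "\<forall>i j. e i \<bullet> e j = (if i = j then 1 else 0)" and en: "\<forall>j. e j \<bullet> nv = 0"
  shows "d = (d \<bullet> nv) *\<^sub>R nv + (\<Sum>j\<in>UNIV. (d \<bullet> e j) *\<^sub>R e j)"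
proof -
  define B where "B = insert nv (range e)"
  have "inj e" using eo by (metis injI zero_neq_one)
  moreover have "nv \<notin> range e" using nv en by force
  ultimately have "card B = CARD('m) + 1" by (simp add: B_def card_image)
  moreover have "independent B"
  proof (rule pairwise_orthogonal_independent)
    show "pairwise orthogonal B"
      using eo en \<open>inj e\<close> by (auto simp: B_def pairwise_def orthogonal_def inner_commute inj_eq)
    show "0 \<notin> B"
      using nv eo unfolding B_def by (metis image_iff inner_zero_left insert_iff zero_neq_one)
  qed
  ultimately have span: "UNIV \<subseteq> span B"
    using card by (intro card_ge_dim_independent) auto
  define v where "v = d - ((d \<bullet> nv) *\<^sub>R nv + (\<Sum>j\<in>UNIV. (d \<bullet> e j) *\<^sub>R e j))"
  have "v \<bullet> nv = 0"
    unfolding v_def using nv en by (simp add: inner_diff_left inner_add_left inner_sum_left)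
  moreover have "v \<bullet> e k = 0" for k
  proof -
    have "(\<Sum>j\<in>UNIV. (d \<bullet> e j) * (e j \<bullet> e k)) = (\<Sum>j\<in>UNIV. if j = k then d \<bullet> e k else 0)"
      using eo by (intro sum.cong) auto
    moreover have "nv \<bullet> e k = 0" using en by (simp add: inner_commute)
    ultimately show ?thesis
      unfolding v_def by (simp add: inner_diff_left inner_add_left inner_sum_left)
  qed
  moreover have "v \<in> span B" using span by blast
  ultimately have "orthogonal v v"
    by (intro orthogonal_to_span[of v B]) (auto simp: B_def orthogonal_def inner_commute)
  then show ?thesis by (simp add: orthogonal_def v_def)
qed

text \<open>The hypotheses of the theorem, for the constant \<open>c = 1/(8 n\<^sup>2)\<close>; it is chosen so that
  the bound \<open>2 n\<^sup>2 \<rho>1 M2\<close> on the variation of the normal derivative over the polydisc of radius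
  \<open>2 \<rho>1\<close> is at most \<open>\<mu>/4\<close>.\<close>
locale normal_graph =
  fixes f :: "complex^'n \<Rightarrow> complex" and x0 :: "real^'n" and \<rho>0 \<rho>1 c :: real
    and e :: "'m::finite \<Rightarrow> real^'n"
  assumes card: "CARD('n) = CARD('m) + 1"
    and c_eq: "c = 1 / (8 * real CARD('n)^2)"
    and \<rho>0_pos: "\<rho>0 > 0"
    and analytic: "analytic_vec_on f {z. supn (z - cvec x0) < \<rho>0}"
    and real_on_reals: "\<forall>x. cvec x \<in> {z. supn (z - cvec x0) < \<rho>0} \<longrightarrow> f (cvec x) \<in> \<real>"
    and bdd: "bdd_above {cmod (cpd i (cpd j f) z) |i j z. z \<in> {z. supn (z - cvec x0) < \<rho>0}}"
    and grad_pos: "0 < norm (rgrad f x0)"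
    and orthonormal: "\<forall>i j. e i \<bullet> e j = (if i = j then 1 else 0)"
    and normal: "\<forall>j. e j \<bullet> (1 / norm (rgrad f x0)) *\<^sub>R rgrad f x0 = 0"
    and \<rho>1_le_\<rho>0: "\<rho>1 \<le> c * \<rho>0"
    and \<rho>1_M2: "\<rho>1 * Sup {cmod (cpd i (cpd j f) z) |i j z. z \<in> {z. supn (z - cvec x0) < \<rho>0}}
      \<le> c * norm (rgrad f x0)"
begin

definition "z0 = cvec x0"
definition "E0 = f z0"
definition "\<mu> = norm (rgrad f x0)"
definition "nv = (1 / \<mu>) *\<^sub>R rgrad f x0"
definition "M2 = Sup {cmod (cpd i (cpd j f) z) |i j z. z \<in> {z. supn (z - cvec x0) < \<rho>0}}"
definition "\<phi> = phic x0 nv e"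
definition "r = c * \<rho>1"
definition "r' = c * \<rho>1 * min 1 \<mu>"
definition "N = real CARD('n)"
definition "tangent w = (\<Sum>j\<in>UNIV. cscale (w $ j) (cvec (e j)))"

lemma cdiff_polydisc: "cdiff_on f (cscale \<i>) {z. supn (z - z0) < \<rho>0}"
  using analytic by (simp add: analytic_vec_on_def z0_def)

lemma M2_bound: "supn (w - z0) < \<rho>0 \<Longrightarrow> norm (cpd i (cpd j f) w) \<le> M2"
  unfolding M2_def z0_def by (rule cSup_upper[OF _ bdd]) auto

lemma M2_nonneg: "0 \<le> M2"
proof -
  have "norm (cpd i (cpd i f) z0) \<le> M2" for i using M2_bound \<rho>0_pos by (simp add: supn_def)
  then show ?thesis using norm_ge_zero order_trans by blast
qed

lemma \<mu>_pos: "0 < \<mu>"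
  using grad_pos by (simp add: \<mu>_def)

lemma \<rho>1_M2_le: "\<rho>1 * M2 \<le> c * \<mu>"
  using \<rho>1_M2 by (simp add: M2_def \<mu>_def)

lemma grad_eq: "rgrad f x0 = \<mu> *\<^sub>R nv"
  using \<mu>_pos by (simp add: nv_def)

lemma inner_nv_nv: "nv \<bullet> nv = 1"
  using \<mu>_pos by (simp add: nv_def \<mu>_def dot_square_norm power2_eq_square)

lemma e_inner_nv: "e j \<bullet> nv = 0"
  using normal unfolding nv_def \<mu>_def by blast

lemma N_ge_2: "N \<ge> 2" and card_m_le_N: "real CARD('m) \<le> N"
proof -
  have "CARD('m) \<ge> 1" by (simp add: Suc_leI)
  then show "N \<ge> 2" "real CARD('m) \<le> N" unfolding N_def using card by auto
qed

lemma c_pos: "0 < c" and c_le: "c \<le> 1/32" and N2_c: "8 * N^2 * c = 1"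
proof -
  have "4 \<le> N^2" using power_mono[OF N_ge_2, of 2] by simp
  then have "1 / (8 * N^2) \<le> 1/32" by (intro divide_left_mono) auto
  moreover have "N \<noteq> 0" using N_ge_2 by simp
  ultimately show "0 < c" "c \<le> 1/32" "8 * N^2 * c = 1"
    unfolding c_eq N_def[symmetric] by auto
qed

lemma N_c_le_1: "N * c \<le> 1"
proof -
  have "N * c \<le> 8 * N^2 * c" using N_ge_2 c_pos by (intro mult_right_mono) (auto simp: power2_eq_square)
  then show ?thesis using N2_c by simp
qed

lemma \<rho>1_pos_if_r_pos: "0 < r \<Longrightarrow> 0 < \<rho>1"
  using c_pos by (simp add: r_def zero_less_mult_iff)

lemma two_\<rho>1_less_\<rho>0: "2 * \<rho>1 < \<rho>0"
  using \<rho>1_le_\<rho>0 mult_right_mono[OF c_le less_imp_le[OF \<rho>0_pos]] \<rho>0_pos by linarith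

lemma N_r_le_\<rho>1: "0 \<le> \<rho>1 \<Longrightarrow> N * r \<le> \<rho>1"
  using mult_left_mono[OF N_c_le_1, of \<rho>1] by (simp add: r_def ac_simps)

lemma phi_eq: "\<phi> \<xi> w = z0 + cscale \<xi> (cvec nv) + tangent w"
  by (simp add: \<phi>_def phic_def z0_def tangent_def)

lemma tangent_add: "tangent (a + b) = tangent a + tangent b"
  by (simp add: tangent_def cscale_add_left sum.distrib)

lemma tangent_cscale: "tangent (cscale a h) = cscale a (tangent h)"
  by (simp add: tangent_def cscale_sum cscale_mult)

lemma bounded_linear_tangent: "bounded_linear tangent"
proof -
  have "linear tangent"
    by (intro linearI tangent_add) (simp only: scaleR_eq_cscale tangent_cscale)
  then show ?thesis by (simp add: linear_conv_bounded_linear)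
qed

lemma supn_tangent_le: "supn (tangent w) \<le> N * supn w"
proof -
  have "supn (tangent w) \<le> (\<Sum>j\<in>UNIV. supn (cscale (w $ j) (cvec (e j))))"
    unfolding tangent_def by (rule supn_sum_le)
  also have "\<dots> \<le> (\<Sum>j\<in>(UNIV::'m set). supn w)"
  proof (rule sum_mono)
    fix j
    have "norm (e j) = 1" using orthonormal by (simp add: norm_eq_sqrt_inner)
    then have "supn (cvec (e j)) \<le> 1" using supn_cvec_le[of "e j"] by simp
    then have "norm (w $ j) * supn (cvec (e j)) \<le> supn w * 1"
      by (intro mult_mono norm_nth_le_supn supn_nonneg) auto
    then show "supn (cscale (w $ j) (cvec (e j))) \<le> supn w"
      using supn_cscale_le[of "w $ j" "cvec (e j)"] by simp
  qed
  also have "\<dots> \<le> N * supn w"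
    using card_m_le_N by (simp add: mult_right_mono supn_nonneg)
  finally show ?thesis .
qed

lemma supn_phi_less:
  assumes "norm \<xi> < \<rho>1" "supn w < r"
  shows "supn (\<phi> \<xi> w - z0) < 2 * \<rho>1"
proof -
  have "supn (cvec nv) \<le> 1"
    using supn_cvec_le[of nv] inner_nv_nv by (simp add: norm_eq_sqrt_inner)
  then have "supn (cscale \<xi> (cvec nv)) \<le> norm \<xi>"
    using supn_cscale_le[of \<xi> "cvec nv"] mult_left_mono[of _ 1 "norm \<xi>"] by fastforce
  then have "supn (\<phi> \<xi> w - z0) \<le> norm \<xi> + N * supn w"
    using supn_add_le[of "cscale \<xi> (cvec nv)" "tangent w"] supn_tangent_le[of w]
    by (simp add: phi_eq)
  also have "N * supn w \<le> N * r" using assms N_ge_2 by (intro mult_left_mono) auto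
  also have "N * r \<le> \<rho>1"
    using assms(1) norm_ge_zero[of \<xi>] by (intro N_r_le_\<rho>1) linarith
  finally show ?thesis using assms by simp
qed

lemma supn_phi_less_\<rho>0: "norm \<xi> < \<rho>1 \<Longrightarrow> supn w < r \<Longrightarrow> supn (\<phi> \<xi> w - z0) < \<rho>0"
  using supn_phi_less two_\<rho>1_less_\<rho>0 by fastforce

lemma cdifferential_z0_cvec: "cdifferential f z0 (cvec v) = complex_of_real (rgrad f x0 \<bullet> v)"
proof -
  have "cpd j f z0 = complex_of_real (rgrad f x0 $ j)" for j
    using cpd_eq_rgrad[OF cdiff_polydisc[unfolded z0_def] \<rho>0_pos] real_on_reals by (simp add: z0_def)
  then show ?thesis by (simp add: cdifferential_def inner_vec_def mult.commute)
qed

lemma cdifferential_z0_nv: "cdifferential f z0 (cvec nv) = complex_of_real \<mu>"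
  by (simp add: cdifferential_z0_cvec grad_eq inner_nv_nv)

lemma cdifferential_z0_tangent: "cdifferential f z0 (tangent w) = 0"
  using e_inner_nv
  by (simp add: tangent_def cdifferential_sum cdifferential_cscale cdifferential_z0_cvec
      grad_eq inner_commute)

lemma normal_derivative_close:
  assumes z: "supn (z - z0) < 2 * \<rho>1"
  shows "norm (cdifferential f z (cvec nv) - \<mu>) \<le> \<mu>/4"
proof -
  have zP: "supn (z - z0) < \<rho>0" using z two_\<rho>1_less_\<rho>0 by simp
  have "norm (z $ k - z0 $ k) \<le> 2 * \<rho>1" for k
    using norm_nth_le_supn[of "z - z0" k] z by simp
  then have "(\<Sum>k\<in>UNIV. norm (z $ k - z0 $ k)) \<le> N * (2 * \<rho>1)"
    using sum_bounded_above[of UNIV "\<lambda>k. norm (z $ k - z0 $ k)" "2 * \<rho>1"] by (simp add: N_def)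
  then have cpd_close: "norm (cpd j f z - cpd j f z0) \<le> M2 * (N * (2 * \<rho>1))" for j
    using cpd_lipschitz_on_polydisc[OF cdiff_polydisc M2_bound zP] M2_nonneg
    by (meson mult_left_mono order_trans)
  have "nv \<bullet> nv = 1" by (rule inner_nv_nv)
  then have nv_le: "\<bar>nv $ j\<bar> \<le> 1" for j
    using component_le_norm_cart[of nv j] by (simp add: norm_eq_sqrt_inner)
  have "cdifferential f z (cvec nv) - \<mu> = (\<Sum>j\<in>UNIV. complex_of_real (nv $ j) * (cpd j f z - cpd j f z0))"
    using cdifferential_z0_nv
    by (simp add: cdifferential_def sum_subtractf algebra_simps)
  then have "norm (cdifferential f z (cvec nv) - \<mu>)
      \<le> (\<Sum>j\<in>UNIV. norm (complex_of_real (nv $ j) * (cpd j f z - cpd j f z0)))"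
    by (simp add: norm_sum)
  also have "\<dots> \<le> (\<Sum>j\<in>(UNIV::'n set). 1 * (M2 * (N * (2 * \<rho>1))))"
    unfolding norm_mult using nv_le cpd_close by (intro sum_mono mult_mono) auto
  also have "\<dots> = 2 * N^2 * (\<rho>1 * M2)" by (simp add: N_def power2_eq_square)
  also have "\<dots> \<le> 2 * N^2 * (c * \<mu>)" using \<rho>1_M2_le by (intro mult_left_mono) auto
  also have "\<dots> = \<mu>/4" using N2_c by (simp add: field_simps)
  finally show ?thesis .
qed

text \<open>Newton's method for \<open>\<xi> \<mapsto> f (\<phi> \<xi> w) - E\<close> with the derivative frozen at its value
  \<open>\<mu>\<close> at \<open>x0\<close>.\<close>
definition "chord_map w E \<xi> = \<xi> - (f (\<phi> \<xi> w) - E) / complex_of_real \<mu>"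

lemma chord_map_fixed_iff: "chord_map w E \<xi> = \<xi> \<longleftrightarrow> f (\<phi> \<xi> w) = E"
  using \<mu>_pos by (simp add: chord_map_def)

lemma chord_map_contraction:
  assumes "supn w < r" "norm \<xi>1 < \<rho>1" "norm \<xi>2 < \<rho>1"
  shows "norm (chord_map w E \<xi>1 - chord_map w E \<xi>2) \<le> 1/4 * norm (\<xi>1 - \<xi>2)"
proof (rule field_differentiable_bound[where S = "ball 0 \<rho>1"])
  fix \<xi> :: complex assume "\<xi> \<in> ball 0 \<rho>1"
  then have \<xi>: "norm \<xi> < \<rho>1" by simp
  have "\<phi> 0 w + cscale \<xi> (cvec nv) \<in> {z. supn (z - z0) < \<rho>0}"
    using supn_phi_less_\<rho>0[OF \<xi> assms(1)] by (simp add: phi_eq ac_simps)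
  from cdiff_on_has_field_derivative_along_line[OF cdiff_polydisc this]
  have "((\<lambda>\<xi>. f (\<phi> \<xi> w)) has_field_derivative cdifferential f (\<phi> \<xi> w) (cvec nv)) (at \<xi>)"
    by (simp add: phi_eq ac_simps)
  then have "(chord_map w E has_field_derivative 1 - (cdifferential f (\<phi> \<xi> w) (cvec nv) - 0) / \<mu>) (at \<xi>)"
    unfolding chord_map_def[abs_def] by (intro DERIV_diff DERIV_ident DERIV_cdivide DERIV_const)
  then show "(chord_map w E has_field_derivative 1 - cdifferential f (\<phi> \<xi> w) (cvec nv) / \<mu>)
      (at \<xi> within ball 0 \<rho>1)"
    by (simp add: has_field_derivative_at_within)
  have "1 - cdifferential f (\<phi> \<xi> w) (cvec nv) / \<mu> = - (cdifferential f (\<phi> \<xi> w) (cvec nv) - \<mu>) / \<mu>"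
    using \<mu>_pos by (simp add: field_simps)
  then show "norm (1 - cdifferential f (\<phi> \<xi> w) (cvec nv) / \<mu>) \<le> 1/4"
    using normal_derivative_close[OF supn_phi_less[OF \<xi> assms(1)]] \<mu>_pos
    by (simp add: norm_divide divide_le_eq norm_minus_commute)
qed (use assms in auto)

text \<open>There is no first-order term because \<open>\<nabla>f(x0)\<close> is orthogonal to the frame \<open>e\<close>.\<close>
lemma f_phi_zero_close:
  assumes w: "supn w < r"
  shows "norm (f (\<phi> 0 w) - E0) \<le> N^4 * M2 * (supn w)^2"
proof -
  have "0 < \<rho>1" using \<rho>1_pos_if_r_pos w supn_nonneg[of w] by linarith
  have tangent_le: "supn (tangent w) \<le> N * supn w" by (rule supn_tangent_le)
  also have "\<dots> \<le> N * r" using w N_ge_2 by (intro mult_left_mono) auto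
  also have "\<dots> \<le> \<rho>1" using \<open>0 < \<rho>1\<close> by (intro N_r_le_\<rho>1) simp
  finally have "supn (tangent w) < \<rho>0" using two_\<rho>1_less_\<rho>0 \<open>0 < \<rho>1\<close> by linarith
  from first_order_taylor_on_polydisc[OF cdiff_polydisc M2_bound this]
  have "norm (f (\<phi> 0 w) - E0) \<le> N^2 * M2 * (supn (tangent w))^2"
    by (simp add: phi_eq E0_def cdifferential_z0_tangent N_def)
  also have "\<dots> \<le> N^2 * M2 * (N * supn w)^2"
    using M2_nonneg tangent_le supn_nonneg[of "tangent w"]
    by (intro mult_left_mono power_mono) auto
  also have "\<dots> = N^4 * M2 * (supn w)^2" by (simp add: power_mult_distrib field_simps)
  finally show ?thesis .
qed

lemma chord_map_zero_bound:
  assumes w: "supn w < r" and E: "norm (E - E0) < r'"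
  shows "2 * norm (chord_map w E 0) \<le> 2 / \<mu> * (norm (E - E0) + N^4 * M2 * (supn w)^2)"
    and "2 * norm (chord_map w E 0) < \<rho>1"
proof -
  have "0 < \<rho>1" using \<rho>1_pos_if_r_pos w supn_nonneg[of w] by linarith
  have chord: "norm (chord_map w E 0) = norm (f (\<phi> 0 w) - E) / \<mu>"
    using \<mu>_pos by (simp add: chord_map_def norm_divide norm_minus_commute)
  have "norm (f (\<phi> 0 w) - E) \<le> norm (f (\<phi> 0 w) - E0) + norm (E - E0)"
    using norm_triangle_ineq[of "f (\<phi> 0 w) - E0" "E0 - E"] by (simp add: norm_minus_commute)
  then have A: "norm (f (\<phi> 0 w) - E) \<le> norm (E - E0) + N^4 * M2 * (supn w)^2"
    using f_phi_zero_close[OF w] by simp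
  then show "2 * norm (chord_map w E 0) \<le> 2 / \<mu> * (norm (E - E0) + N^4 * M2 * (supn w)^2)"
    unfolding chord using \<mu>_pos by (simp add: divide_right_mono field_simps)
  have "N^4 * M2 * (supn w)^2 \<le> N^4 * M2 * r^2"
    using w supn_nonneg[of w] M2_nonneg by (intro mult_left_mono power_mono) auto
  also have "\<dots> = ((N^2 * c) * (N^2 * c) * \<rho>1) * (\<rho>1 * M2)"
    by (simp add: r_def power2_eq_square power4_eq_xxxx)
  also have "\<dots> \<le> ((N^2 * c) * (N^2 * c) * \<rho>1) * (c * \<mu>)"
    using \<rho>1_M2_le \<open>0 < \<rho>1\<close> c_pos by (intro mult_left_mono) auto
  also have "N^2 * c = 1/8" using N2_c by simp
  finally have B: "N^4 * M2 * (supn w)^2 \<le> c * \<rho>1 * \<mu> / 64"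
    by (simp add: ac_simps)
  have "r' \<le> c * \<rho>1 * \<mu>"
    unfolding r'_def using c_pos \<open>0 < \<rho>1\<close> by (intro mult_left_mono) auto
  then have "norm (f (\<phi> 0 w) - E) < c * \<rho>1 * \<mu> * (65/64)"
    using A B E by linarith
  then have "norm (chord_map w E 0) < c * \<rho>1 * (65/64)"
    unfolding chord using \<mu>_pos by (simp add: divide_less_eq ac_simps)
  then show "2 * norm (chord_map w E 0) < \<rho>1"
    using mult_right_mono[OF c_le, of \<rho>1] \<open>0 < \<rho>1\<close> by linarith
qed

lemma solution_exists:
  assumes w: "supn w < r" and E: "norm (E - E0) < r'"
  shows "\<exists>\<xi>. norm \<xi> \<le> 2 * norm (chord_map w E 0) \<and> f (\<phi> \<xi> w) = E"
proof -
  define R where "R = 2 * norm (chord_map w E 0)"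
  have R: "R < \<rho>1" "0 \<le> R" using chord_map_zero_bound(2)[OF w E] by (auto simp: R_def)
  then have in_disc: "norm \<xi> < \<rho>1" if "\<xi> \<in> cball 0 R" for \<xi> using that by auto
  have "\<exists>!\<xi>\<in>cball 0 R. chord_map w E \<xi> = \<xi>"
  proof (rule Banach_fix[where c = "1/4"])
    show "chord_map w E ` cball 0 R \<subseteq> cball 0 R"
    proof clarify
      fix \<xi> :: complex assume \<xi>: "\<xi> \<in> cball 0 R"
      have "norm (chord_map w E \<xi> - chord_map w E 0) \<le> 1/4 * norm (\<xi> - 0)"
        using R by (intro chord_map_contraction[OF w in_disc[OF \<xi>]]) auto
      then have "norm (chord_map w E \<xi>) \<le> 1/4 * R + R/2"
        using \<xi> norm_triangle_ineq[of "chord_map w E \<xi> - chord_map w E 0" "chord_map w E 0"]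
        by (simp add: R_def)
      then show "chord_map w E \<xi> \<in> cball 0 R" using R by simp
    qed
  next
    fix x y :: complex assume "x \<in> cball 0 R" "y \<in> cball 0 R"
    then show "dist (chord_map w E x) (chord_map w E y) \<le> 1/4 * dist x y"
      using chord_map_contraction[OF w in_disc in_disc] by (simp add: dist_norm)
  qed (use R in \<open>auto simp: complete_eq_closed\<close>)
  then show ?thesis using chord_map_fixed_iff by (auto simp: R_def)
qed

lemma solution_unique:
  assumes "supn w < r" "norm \<xi>1 < \<rho>1" "f (\<phi> \<xi>1 w) = E" "norm \<xi>2 < \<rho>1" "f (\<phi> \<xi>2 w) = E"
  shows "\<xi>1 = \<xi>2"
proof -
  have "norm (\<xi>1 - \<xi>2) = norm (chord_map w E \<xi>1 - chord_map w E \<xi>2)"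
    using assms chord_map_fixed_iff by metis
  also have "\<dots> \<le> 1/4 * norm (\<xi>1 - \<xi>2)" using chord_map_contraction assms by blast
  finally show ?thesis by simp
qed

definition "g w E = (THE \<xi>. norm \<xi> < \<rho>1 \<and> f (\<phi> \<xi> w) = E)"

lemma g_solves:
  assumes "supn w < r" "norm (E - E0) < r'"
  shows "norm (g w E) < \<rho>1 \<and> f (\<phi> (g w E) w) = E"
proof -
  obtain \<xi> where "norm \<xi> \<le> 2 * norm (chord_map w E 0)" "f (\<phi> \<xi> w) = E"
    using solution_exists[OF assms] by blast
  moreover have "2 * norm (chord_map w E 0) < \<rho>1" by (rule chord_map_zero_bound(2)[OF assms])
  ultimately have "\<exists>!\<xi>. norm \<xi> < \<rho>1 \<and> f (\<phi> \<xi> w) = E"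
    using solution_unique[OF assms(1)] by (metis order_le_less_trans)
  then show ?thesis unfolding g_def by (rule theI')
qed

lemma g_unique:
  assumes "supn w < r" "norm (E - E0) < r'" "norm \<xi> < \<rho>1" "f (\<phi> \<xi> w) = E"
  shows "\<xi> = g w E"
  using g_solves[OF assms(1,2)] solution_unique[OF assms(1,3,4)] by simp

lemma g_bound:
  assumes "supn w < r" "norm (E - E0) < r'"
  shows "norm (g w E) \<le> 2 / \<mu> * (norm (E - E0) + real CARD('n) ^ 4 * M2 * (supn w)^2)"
proof -
  obtain \<xi> where \<xi>: "norm \<xi> \<le> 2 * norm (chord_map w E 0)" "f (\<phi> \<xi> w) = E"
    using solution_exists[OF assms] by blast
  then have "\<xi> = g w E"
    using chord_map_zero_bound(2)[OF assms] by (intro g_unique[OF assms]) auto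
  then show ?thesis using \<xi>(1) chord_map_zero_bound(1)[OF assms] by (simp add: N_def)
qed

definition param_domain :: "((complex^'m) \<times> complex) set"
  where "param_domain = {(w, E). supn w < r \<and> cmod (E - E0) < r'}"

lemma open_param_domain: "open param_domain"
proof -
  have "param_domain = (\<Inter>i. {p. norm (fst p $ i) < r}) \<inter> {p. norm (snd p - E0) < r'}"
    by (auto simp: param_domain_def supn_less_iff)
  moreover have "open {p :: (complex^'m) \<times> complex. norm (fst p $ i) < r}" for i
    by (intro open_Collect_less continuous_intros)
  then have "open (\<Inter>i. {p :: (complex^'m) \<times> complex. norm (fst p $ i) < r})"
    by (intro open_INT) auto
  moreover have "open {p :: (complex^'m) \<times> complex. norm (snd p - E0) < r'}"
    by (intro open_Collect_less continuous_intros)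
  ultimately show ?thesis by (simp add: open_Int)
qed

text \<open>Continuity of \<open>g\<close> follows from the uniform contraction: \<open>|g p - g q|\<close> is at most
  twice the change of the chord map at the fixed point \<open>g q\<close>.\<close>
lemma g_continuous:
  assumes q: "q \<in> param_domain"
  shows "isCont (\<lambda>(w, E). g w E) q"
proof -
  define \<xi>q where "\<xi>q = g (fst q) (snd q)"
  define H where "H p = chord_map (fst p) (snd p) \<xi>q - chord_map (fst q) (snd q) \<xi>q" for p
  have sol: "norm (g (fst p) (snd p)) < \<rho>1 \<and> chord_map (fst p) (snd p) (g (fst p) (snd p)) = g (fst p) (snd p)"
    if "p \<in> param_domain" for p
    using that g_solves chord_map_fixed_iff by (auto simp: param_domain_def)
  have est: "norm (g (fst p) (snd p) - \<xi>q) \<le> 2 * norm (H p)" if p: "p \<in> param_domain" for p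
  proof -
    define \<xi>p where "\<xi>p = g (fst p) (snd p)"
    define T where "T = chord_map (fst p) (snd p)"
    have "supn (fst p) < r" using p by (auto simp: param_domain_def)
    then have contr: "norm (T \<xi>p - T \<xi>q) \<le> 1/4 * norm (\<xi>p - \<xi>q)"
      unfolding T_def using sol[OF p] sol[OF q] \<xi>p_def \<xi>q_def by (intro chord_map_contraction) auto
    have "\<xi>p - \<xi>q = (T \<xi>p - T \<xi>q) + H p"
      using sol[OF p] sol[OF q] by (simp add: H_def T_def \<xi>p_def \<xi>q_def)
    then have "norm (\<xi>p - \<xi>q) \<le> norm (T \<xi>p - T \<xi>q) + norm (H p)"
      by (metis norm_triangle_ineq)
    then show ?thesis using contr norm_ge_zero[of "H p"] unfolding \<xi>p_def by linarith
  qed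
  have "supn (\<phi> \<xi>q (fst q) - z0) < \<rho>0"
    using sol[OF q] q supn_phi_less_\<rho>0 by (auto simp: \<xi>q_def param_domain_def)
  then have "isCont f (\<phi> \<xi>q (fst q))"
    using has_derivative_continuous[OF cdiff_on_has_derivative[OF cdiff_polydisc]] by simp
  moreover have "((\<lambda>p. \<phi> \<xi>q (fst p)) \<longlongrightarrow> \<phi> \<xi>q (fst q)) (at q)"
    unfolding phi_eq by (intro tendsto_intros bounded_linear.tendsto[OF bounded_linear_tangent])
  ultimately have "(H \<longlongrightarrow> H q) (at q)"
    unfolding H_def chord_map_def
    by (intro tendsto_intros isCont_tendsto_compose[where g = f]) (use \<mu>_pos in auto)
  then have "(H \<longlongrightarrow> 0) (at q)" by (simp add: H_def)
  then have H0: "((\<lambda>p. 2 * norm (H p)) \<longlongrightarrow> 0) (at q)"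
    using tendsto_mult_right_zero[OF tendsto_norm_zero] by blast
  have "\<forall>\<^sub>F p in at q. norm (g (fst p) (snd p) - \<xi>q) \<le> 2 * norm (H p)"
    using eventually_at_in_open'[OF open_param_domain q] by (rule eventually_mono) (rule est)
  from Lim_null_comparison[OF this H0]
  have "((\<lambda>p. g (fst p) (snd p) - \<xi>q) \<longlongrightarrow> 0) (at q)" .
  then show ?thesis
    by (simp add: isCont_def case_prod_beta' \<xi>q_def LIM_zero_iff)
qed

lemma graph_map_has_derivative:
  assumes "supn (\<phi> \<xi> w - z0) < \<rho>0"
  shows "((\<lambda>p. (fst p, f (\<phi> (snd p) (fst p)))) has_derivative
      (\<lambda>q. (fst q, cdifferential f (\<phi> \<xi> w) (cscale (snd q) (cvec nv) + tangent (fst q))))) (at (w, \<xi>))"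
proof -
  define L where "L q = cscale (snd q) (cvec nv) + tangent (fst q)" for q :: "(complex^'m) \<times> complex"
  have "linear L"
    by (intro linearI)
      (simp_all add: L_def cscale_add_left cscale_add_right tangent_add scaleR_eq_cscale tangent_cscale
        cscale_mult scaleR_conv_of_real algebra_simps)
  then have "((\<lambda>p. z0 + L p) has_derivative L) (at (w, \<xi>))"
    by (auto intro!: derivative_eq_intros simp: linear_conv_bounded_linear
        bounded_linear_imp_has_derivative)
  moreover have "(f has_derivative cdifferential f (\<phi> \<xi> w)) (at (z0 + L (w, \<xi>)))"
    using cdiff_on_has_derivative[OF cdiff_polydisc] assms by (simp add: L_def phi_eq add.assoc)
  ultimately have "((\<lambda>p. f (z0 + L p)) has_derivative (\<lambda>q. cdifferential f (\<phi> \<xi> w) (L q))) (at (w, \<xi>))"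
    using diff_chain_at by (fastforce simp: o_def)
  then show ?thesis
    using has_derivative_Pair[OF has_derivative_fst[OF has_derivative_ident]]
    by (simp add: L_def phi_eq add.assoc)
qed

lemma g_analytic: "analytic_pair_on g param_domain"
  unfolding analytic_pair_on_def cdiff_on_def
proof (intro conjI open_param_domain ballI)
  fix y assume y: "y \<in> param_domain"
  define w where "w = fst y"
  define \<xi> where "\<xi> = g w (snd y)"
  have sol: "norm \<xi> < \<rho>1" "supn w < r"
    using y g_solves by (auto simp: \<xi>_def w_def param_domain_def)
  define a where "a = cdifferential f (\<phi> \<xi> w) (cvec nv)"
  have "norm (a - \<mu>) \<le> \<mu>/4"
    unfolding a_def by (rule normal_derivative_close[OF supn_phi_less[OF sol]])
  then have "a \<noteq> 0" using \<mu>_pos by auto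
  define A where "A h = cdifferential f (\<phi> \<xi> w) (tangent h)" for h
  define g' where "g' q = (fst q, (snd q - A (fst q)) / a)" for q :: "(complex^'m) \<times> complex"
  have bl: "bounded_linear g'"
  proof -
    have "linear g'"
      by (intro linearI)
        (simp_all add: g'_def A_def tangent_add cdifferential_add scaleR_eq_cscale tangent_cscale
          cdifferential_cscale scaleR_conv_of_real add_divide_distrib[symmetric] algebra_simps)
    then show ?thesis by (simp add: linear_conv_bounded_linear)
  qed
  define D where
    "D q = (fst q, cdifferential f (\<phi> \<xi> w) (cscale (snd q) (cvec nv) + tangent (fst q)))" for q
  have inv: "g' \<circ> D = id"
    using \<open>a \<noteq> 0\<close> by (auto simp: D_def g'_def A_def a_def cdifferential_add cdifferential_cscale)
  have cont: "continuous (at y) (\<lambda>p. (fst p, g (fst p) (snd p)))"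
    using g_continuous[OF y] by (intro continuous_intros) (simp add: isCont_def case_prod_beta')
  have left_inv: "(fst p, f (\<phi> (g (fst p) (snd p)) (fst p))) = p" if "p \<in> param_domain" for p
    using that g_solves by (auto simp: param_domain_def)
  have deriv: "((\<lambda>p. (fst p, f (\<phi> (snd p) (fst p)))) has_derivative D)
      (at ((\<lambda>p. (fst p, g (fst p) (snd p))) y))"
    using graph_map_has_derivative[OF supn_phi_less_\<rho>0[OF sol]]
    by (simp add: w_def \<xi>_def D_def[abs_def])
  have "((\<lambda>p. (fst p, g (fst p) (snd p))) has_derivative g') (at y)"
  proof (rule has_derivative_inverse_basic[OF _ bl _ cont open_param_domain y])
    show "((\<lambda>p. (fst p, f (\<phi> (snd p) (fst p)))) has_derivative D)
        (at ((\<lambda>p. (fst p, g (fst p) (snd p))) y))"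
      by (rule deriv)
    show "(\<lambda>p. (fst p, f (\<phi> (snd p) (fst p)))) ((\<lambda>p. (fst p, g (fst p) (snd p))) z) = z"
      if "z \<in> param_domain" for z
      using left_inv[OF that] by simp
  qed (rule inv)
  from has_derivative_snd[OF this]
  have "((\<lambda>(w, E). g w E) has_derivative (\<lambda>q. snd (g' q))) (at y)"
    by (simp add: case_prod_beta')
  moreover have "snd (g' (cscale \<i> h, \<i> * E)) = \<i> * snd (g' (h, E))" for h E
    by (simp add: g'_def A_def tangent_cscale cdifferential_cscale algebra_simps diff_divide_distrib)
  ultimately show "\<exists>D. ((\<lambda>(w, E). g w E) has_derivative D) (at y) \<and>
      (\<forall>h. D ((\<lambda>(w, E). (cscale \<i> w, \<i> * E)) h) = \<i> * D h)"
    by (intro exI[of _ "\<lambda>q. snd (g' q)"]) auto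
qed

lemma real_point_on_graph:
  assumes x': "norm (x' - x0) < r" and E: "cmod (E - E0) < r'" and fx: "f (cvec x') = E"
  shows "\<exists>y :: real^'m. norm y \<le> norm (x' - x0) \<and> cvec x' = \<phi> (g (cvec y) E) (cvec y)"
proof -
  define d where "d = x' - x0"
  define y :: "real^'m" where "y = (\<chi> j. d \<bullet> e j)"
  have "d = (d \<bullet> nv) *\<^sub>R nv + (\<Sum>j\<in>UNIV. (y $ j) *\<^sub>R e j)"
    unfolding y_def using card inner_nv_nv orthonormal e_inner_nv
    by (simp add: orthonormal_frame_expansion[of nv e])
  then have d_eq: "d = (d \<bullet> nv) *\<^sub>R nv + (\<Sum>j\<in>UNIV. (y $ j) *\<^sub>R e j)" .
  have "d \<bullet> d = (d \<bullet> nv) * (d \<bullet> nv) + (\<Sum>j\<in>UNIV. y $ j * (d \<bullet> e j))"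
    by (subst (1) d_eq) (simp add: inner_add_right inner_sum_right)
  also have "\<dots> = (d \<bullet> nv)^2 + y \<bullet> y"
    by (simp add: y_def inner_vec_def power2_eq_square)
  finally have "d \<bullet> d = (d \<bullet> nv)^2 + y \<bullet> y" .
  then have "norm y \<le> norm d" by (simp add: norm_eq_sqrt_inner)
  moreover have "\<bar>d \<bullet> nv\<bar> \<le> norm d"
    using Cauchy_Schwarz_ineq2[of d nv] inner_nv_nv by (simp add: norm_eq_sqrt_inner)
  moreover have cx: "cvec x' = \<phi> (complex_of_real (d \<bullet> nv)) (cvec y)"
  proof -
    have "x' $ k = x0 $ k + (d \<bullet> nv) * nv $ k + (\<Sum>j\<in>UNIV. y $ j * e j $ k)" for k
      using arg_cong[OF d_eq, of "\<lambda>v. v $ k"] by (simp add: d_def sum_component)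
    then show ?thesis by (simp add: vec_eq_iff \<phi>_def phic_def sum_component)
  qed
  moreover have "r < \<rho>1" using x' c_le \<rho>1_pos_if_r_pos norm_ge_zero[of "x' - x0"] by (simp add: r_def)
  ultimately have "complex_of_real (d \<bullet> nv) = g (cvec y) E"
    using x' supn_cvec_le[of y] fx by (intro g_unique[OF _ E]) (auto simp: d_def)
  then show ?thesis using cx \<open>norm y \<le> norm d\<close> by (auto simp: d_def)
qed

end

theorem lemma4p4:
  assumes "CARD('n::finite) = CARD('m::finite) + 1"
  shows "\<exists>c>0. \<exists>C::real. \<forall>(f :: complex^'n \<Rightarrow> complex) (x0 :: real^'n) (\<rho>0::real) (\<rho>1::real)
      (e :: 'm \<Rightarrow> real^'n).
    let P = {z. supn (z - cvec x0) < \<rho>0};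
        M2 = Sup {cmod (cpd i (cpd j f) z) | i j z. z \<in> P};
        \<mu> = norm (rgrad f x0);
        nv = (1/\<mu>) *\<^sub>R rgrad f x0;
        E0 = f (cvec x0);
        r = c * \<rho>1;
        r' = c * \<rho>1 * min 1 \<mu>;
        \<phi> = phic x0 nv e
    in (\<rho>0 > 0 \<and> analytic_vec_on f P \<and> (\<forall>x. cvec x \<in> P \<longrightarrow> f (cvec x) \<in> \<real>) \<and>
        bdd_above {cmod (cpd i (cpd j f) z) | i j z. z \<in> P} \<and>
        \<mu> > 0 \<and>
        (\<forall>i j. e i \<bullet> e j = (if i = j then 1 else 0)) \<and> (\<forall>j. e j \<bullet> nv = 0) \<and>
        \<rho>1 \<le> c * \<rho>0 \<and> \<rho>1 * M2 \<le> c * \<mu>)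
    \<longrightarrow> (\<exists>g :: complex^'m \<Rightarrow> complex \<Rightarrow> complex.
          (\<forall>w E. supn w < r \<longrightarrow> cmod (E - E0) < r' \<longrightarrow>
              cmod (g w E) < \<rho>1 \<and> f (\<phi> (g w E) w) = E \<and>
              (\<forall>\<xi>. cmod \<xi> < \<rho>1 \<and> f (\<phi> \<xi> w) = E \<longrightarrow> \<xi> = g w E)) \<and>
          analytic_pair_on g {(w, E). supn w < r \<and> cmod (E - E0) < r'} \<and>
          (\<forall>w E. supn w < r \<longrightarrow> cmod (E - E0) < r' \<longrightarrow>
              cmod (g w E) \<le> 2 / \<mu> * (cmod (E - E0) + C * M2 * (supn w)\<^sup>2)) \<and>
          (\<forall>x0' E. norm (x0' - x0) < r \<longrightarrow> cmod (E - E0) < r' \<longrightarrow> f (cvec x0') = E \<longrightarrow>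
              (\<exists>y :: real^'m. norm y \<le> norm (x0' - x0) \<and>
                 cvec x0' = \<phi> (g (cvec y) E) (cvec y))))"
proof -
  define c :: real where "c = 1 / (8 * real CARD('n)^2)"
  show ?thesis
    unfolding Let_def
    apply (rule exI[of _ c], rule conjI)
     apply (simp add: c_def)
    apply (intro exI[of _ "real CARD('n) ^ 4"] allI impI)
    subgoal premises hyps for f x0 \<rho>0 \<rho>1 e
    proof -
      interpret normal_graph f x0 \<rho>0 \<rho>1 c e
        using assms hyps by unfold_locales (auto simp: c_def)
      show ?thesis
        using g_solves g_unique g_analytic g_bound real_point_on_graph
        unfolding param_domain_def \<phi>_def nv_def \<mu>_def M2_def E0_def z0_def r_def r'_def
        by (intro exI[of _ g] conjI allI impI) blast+
    qed
    done
qed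

end
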